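(* Let $u,v\ge0$ be real numbers and let $\mu=\sum_{i,j\ge0}\sum_{\sigma\in\Delta}c_{\sigma,i,j}\sigma X^iY^j\in D^{(u,v)}(G_{p^\infty},F)$. Let $\omega_{\mathfrak p}\in\Omega_{\mathfrak p}$ and put $F'=F(\omega_{\mathfrak p}(\gamma_{\mathfrak p}))$. Then the distribution $\mu^{(\omega_{\mathfrak p})}$ lies in $D^{(v)}(G_{\overline{\mathfrak p}^\infty},F')$.
   Context: Let $K$ be an imaginary quadratic field in which the odd prime $p$ splits as $\mathfrak p\overline{\mathfrak p}$. For an ideal $\mathfrak I$ of $K$, $G_{\mathfrak I}$ is the ray class group of $K$ modulo $\mathfrak I$; $G_{p^\infty}=\varprojlim G_{p^n}$, $G_{\mathfrak p^\infty}=\varprojlim G_{\mathfrak p^n}$, $G_{\overline{\mathfrak p}^\infty}=\varprojlim G_{\overline{\mathfrak p}^n}$. Fix topological generators $\gamma_{\mathfrak p},\gamma_{\overline{\mathfrak p}}$ of the $\mathbb{Z}_p$-parts of $G_{\mathfrak p^\infty}$, $G_{\overline{\mathfrak p}^\infty}$, so $G_{p^\infty}\cong\Delta\times\langle\gamma_{\mathfrak p}\rangle\times\langle\gamma_{\overline{\mathfrak p}}\rangle$ with $\Delta$ finite abelian; $X=\gamma_{\mathfrak p}-1$, $Y=\gamma_{\overline{\mathfrak p}}-1$. $F$ is a finite extension of $\mathbb{Q}_p$ containing $\mu_{|\Delta|}$. For $u,v\ge0$, $D^{(u,v)}(G_{p^\infty},F)$ is the set of $\sum_{i,j\ge0}\sum_{\sigma\in\Delta}c_{\sigma,i,j}\sigma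 X^iY^j$ with $c_{\sigma,i,j}\in F$ and $\sup_{i,j}|c_{\sigma,i,j}|_p/(i^uj^v)<\infty$ for all $\sigma$ (powers of $0$ read as $1$). One-variable spaces $D^{(v)}(\cdot,F')$ are defined analogously with a single variable: series $\sum_j\sum_\sigma c_{\sigma,j}\sigma Y^j$ with $\sup_j|c_{\sigma,j}|_p/j^v<\infty$. For $\star\in\{\mathfrak p,\overline{\mathfrak p}\}$, $\Omega_\star$ is the set of characters of $G_{p^\infty}$ of conductor $\star^n$ for some $n\ge1$. For $\omega_{\mathfrak p}\in\Omega_{\mathfrak p}$, $\mu^{(\omega_{\mathfrak p})}$ denotes the one-variable distribution $\sum_{j\ge0}\sum_{\sigma\in\Delta}\big(\sum_{i\ge0}c_{\sigma,i,j}(\omega_{\mathfrak p}(\gamma_{\mathfrak p})-1)^i\big)\sigma Y^j$ (up to the root-of-unity factors $\omega_{\mathfrak p}(\sigma)$), characterised by $\mu^{(\omega_{\mathfrak p})}(\omega_{\overline{\mathfrak p}})=\mu(\omega_{\mathfrak p}\omega_{\overline{\mathfrak p}})$ for $\omega_{\overline{\mathfrak p}}\in\Omega_{\overline{\mathfrak p}}$. *)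

theory Defs
  imports Complex_Main "HOL-Computational_Algebra.Primes"
begin

definition nonarch_abs :: "('k::field \<Rightarrow> real) \<Rightarrow> bool" where
  "nonarch_abs a \<longleftrightarrow>
     (\<forall>x. 0 \<le> a x) \<and> (\<forall>x. a x = 0 \<longleftrightarrow> x = 0) \<and>
     (\<forall>x y. a (x * y) = a x * a y) \<and> (\<forall>x y. a (x + y) \<le> max (a x) (a y))"

definition abs_tendsto :: "('k::field \<Rightarrow> real) \<Rightarrow> (nat \<Rightarrow> 'k) \<Rightarrow> 'k \<Rightarrow> bool" where
  "abs_tendsto a f L \<longleftrightarrow> (\<lambda>n. a (f n - L)) \<longlonglongrightarrow> 0"

definition abs_cauchy :: "('k::field \<Rightarrow> real) \<Rightarrow> (nat \<Rightarrow> 'k) \<Rightarrow> bool" where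
  "abs_cauchy a f \<longleftrightarrow> (\<forall>e>0. \<exists>N. \<forall>m\<ge>N. \<forall>n\<ge>N. a (f m - f n) < e)"

definition abs_complete :: "('k::field \<Rightarrow> real) \<Rightarrow> 'k set \<Rightarrow> bool" where
  "abs_complete a S \<longleftrightarrow>
     (\<forall>f. (\<forall>n. f n \<in> S) \<longrightarrow> abs_cauchy a f \<longrightarrow> (\<exists>L\<in>S. abs_tendsto a f L))"

definition is_subfield :: "'k::field set \<Rightarrow> bool" where
  "is_subfield K \<longleftrightarrow> 0 \<in> K \<and> 1 \<in> K \<and>
     (\<forall>x\<in>K. \<forall>y\<in>K. x + y \<in> K \<and> x * y \<in> K) \<and>
     (\<forall>x\<in>K. - x \<in> K \<and> inverse x \<in> K)"

definition adjoin :: "'k::field set \<Rightarrow> 'k \<Rightarrow> 'k set" where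
  "adjoin F z = \<Inter> {K. is_subfield K \<and> F \<subseteq> K \<and> z \<in> K}"

definition abs_suminf :: "('k::field \<Rightarrow> real) \<Rightarrow> (nat \<Rightarrow> 'k) \<Rightarrow> 'k" where
  "abs_suminf a f = (THE L. abs_tendsto a (\<lambda>n. \<Sum>i<n. f i) L)"

definition wt :: "nat \<Rightarrow> real \<Rightarrow> real" where
  "wt i u = (if i = 0 then 1 else real i powr u)"

text \<open>D^{(u,v)}: coefficient family c sigma i j (coefficient of sigma X^i Y^j).\<close>
definition D2 :: "('k::field \<Rightarrow> real) \<Rightarrow> 'k set \<Rightarrow> 'd set \<Rightarrow> real \<Rightarrow> real
                   \<Rightarrow> ('d \<Rightarrow> nat \<Rightarrow> nat \<Rightarrow> 'k) \<Rightarrow> bool" where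
  "D2 a F \<Delta> u v c \<longleftrightarrow>
     (\<forall>\<sigma>\<in>\<Delta>. \<forall>i j. c \<sigma> i j \<in> F) \<and>
     (\<forall>\<sigma>\<in>\<Delta>. \<exists>C. \<forall>i j. a (c \<sigma> i j) \<le> C * (wt i u * wt j v))"

text \<open>D^{(v)}: one-variable coefficient family d sigma j (coefficient of sigma Y^j).\<close>
definition D1 :: "('k::field \<Rightarrow> real) \<Rightarrow> 'k set \<Rightarrow> 'd set \<Rightarrow> real
                   \<Rightarrow> ('d \<Rightarrow> nat \<Rightarrow> 'k) \<Rightarrow> bool" where
  "D1 a F \<Delta> v d \<longleftrightarrow>
     (\<forall>\<sigma>\<in>\<Delta>. \<forall>j. d \<sigma> j \<in> F) \<and>
     (\<forall>\<sigma>\<in>\<Delta>. \<exists>C. \<forall>j. a (d \<sigma> j) \<le> C * wt j v)"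

text \<open>mu^(omega): coefficient of sigma Y^j is
  w sigma * sum_i c sigma i j (zeta - 1)^i, with zeta = omega(gamma_p), w sigma = omega(sigma).\<close>
definition specialise :: "('k::field \<Rightarrow> real) \<Rightarrow> ('d \<Rightarrow> nat \<Rightarrow> nat \<Rightarrow> 'k) \<Rightarrow> 'k
                          \<Rightarrow> ('d \<Rightarrow> 'k) \<Rightarrow> 'd \<Rightarrow> nat \<Rightarrow> 'k" where
  "specialise a c \<zeta> w \<sigma> j = w \<sigma> * abs_suminf a (\<lambda>i. c \<sigma> i j * (\<zeta> - 1) ^ i)"

end

(*
  Put \<pi> = \<zeta> - 1 and N = p^m with \<zeta>^N = 1. Expanding (1 + \<pi>)^N = 1 shows
  \<pi>^N = -\<Sum>0<k<N (N choose k) \<pi>^k \<in> p \<int>[\<pi>], because p divides these binomial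
  coefficients; as \<int>[\<pi>] is spanned by 1, \<pi>, ..., \<pi>^(N-1), this gives
  \<pi>^i = \<Sum>k<N e_ik \<pi>^k with integers e_ik divisible by p^(i div N).  Hence
  \<Sum>i c_ij \<pi>^i regroups as \<Sum>k<N (\<Sum>i c_ij e_ik) \<pi>^k, where the inner series have
  terms in F of absolute value at most C i^u j^v p^-(i div N) \<longrightarrow> 0.  They converge in the
  complete field F with sums O(j^v), so the specialised coefficients lie in F(\<zeta>) and
  are O(j^v) as well.
*)
theory Submission
  imports Defs "HOL-Real_Asymp.Real_Asymp" "HOL-Analysis.Elementary_Normed_Spaces"
begin

section \<open>Powers of \<zeta> - 1 in terms of 1, ..., (\<zeta> - 1)^(N-1)\<close>

definition int_span_powers :: "'a::comm_ring_1 \<Rightarrow> nat \<Rightarrow> 'a set" where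
  "int_span_powers x N = range (\<lambda>b. \<Sum>k<N. of_int (b k) * x ^ k)"

lemma zero_in_int_span_powers: "0 \<in> int_span_powers x N"
  unfolding int_span_powers_def by (rule image_eqI[of _ _ "\<lambda>_. 0"]) auto

lemma int_span_powers_add:
  "y \<in> int_span_powers x N \<Longrightarrow> z \<in> int_span_powers x N \<Longrightarrow> y + z \<in> int_span_powers x N"
  unfolding int_span_powers_def
  by (auto simp: sum.distrib[symmetric] distrib_right intro!: image_eqI[of _ _ "\<lambda>k. _ k + _ k"])

lemma int_span_powers_of_int_mult:
  "y \<in> int_span_powers x N \<Longrightarrow> of_int n * y \<in> int_span_powers x N"
  unfolding int_span_powers_def
  by (auto simp: sum_distrib_left mult.assoc intro!: image_eqI[of _ _ "\<lambda>k. n * _ k"])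

lemma int_span_powers_sum:
  "(\<And>i. i \<in> S \<Longrightarrow> f i \<in> int_span_powers x N) \<Longrightarrow> sum f S \<in> int_span_powers x N"
  by (induction S rule: infinite_finite_induct) (auto intro: zero_in_int_span_powers int_span_powers_add)

lemma power_in_int_span_powers: "k < N \<Longrightarrow> x ^ k \<in> int_span_powers x N"
  unfolding int_span_powers_def
proof (rule image_eqI[of _ _ "\<lambda>j. of_bool (j = k)"])
  show "x ^ k = (\<Sum>j<N. of_int (of_bool (j = k)) * x ^ j)" if "k < N"
    using that by (simp add: sum.delta)
qed simp

lemma int_span_powers_mult_gen:
  assumes "x ^ N \<in> int_span_powers x N" "y \<in> int_span_powers x N"
  shows "x * y \<in> int_span_powers x N"
proof -
  obtain b where "y = (\<Sum>k<N. of_int (b k) * x ^ k)"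
    using assms(2) unfolding int_span_powers_def by blast
  then have "x * y = (\<Sum>k<N. of_int (b k) * x ^ Suc k)"
    by (simp add: sum_distrib_left algebra_simps)
  moreover have "x ^ Suc k \<in> int_span_powers x N" if "k < N" for k
    using that assms(1) power_in_int_span_powers[of "Suc k" N x] by (cases "Suc k = N") auto
  ultimately show ?thesis
    by (auto intro: int_span_powers_sum int_span_powers_of_int_mult)
qed

lemma int_span_powers_mult:
  assumes "x ^ N \<in> int_span_powers x N" "y \<in> int_span_powers x N" "z \<in> int_span_powers x N"
  shows "y * z \<in> int_span_powers x N"
proof -
  have powers: "x ^ k * z \<in> int_span_powers x N" for k
    by (induction k) (use assms in \<open>auto simp: mult.assoc intro: int_span_powers_mult_gen\<close>)
  obtain b where "y = (\<Sum>k<N. of_int (b k) * x ^ k)"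
    using assms(2) unfolding int_span_powers_def by blast
  then have "y * z = (\<Sum>k<N. of_int (b k) * (x ^ k * z))"
    by (simp add: sum_distrib_right mult.assoc)
  then show ?thesis
    using powers by (auto intro: int_span_powers_sum int_span_powers_of_int_mult)
qed

lemma int_span_powers_power:
  assumes "x ^ N \<in> int_span_powers x N" "0 < N" "y \<in> int_span_powers x N"
  shows "y ^ n \<in> int_span_powers x N"
proof (induction n)
  case 0
  then show ?case using power_in_int_span_powers[OF assms(2), of x] by simp
next
  case (Suc n)
  then show ?case using int_span_powers_mult[OF assms(1,3)] by simp
qed

lemma prime_dvd_prime_power_choose:
  fixes p :: nat
  assumes "prime p" "0 < k" "k < p ^ m"
  shows "p dvd (p ^ m choose k)"
proof (rule ccontr)
  assume not_dvd: "\<not> p dvd (p ^ m choose k)"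
  have "k * (p ^ m choose k) = p ^ m * (p ^ m - 1 choose (k - 1))"
    using times_binomial_minus1_eq[of k "p ^ m"] assms(2) by simp
  then have "p ^ m dvd k * (p ^ m choose k)" by simp
  moreover have "coprime (p ^ m) (p ^ m choose k)"
    using not_dvd assms(1) by (simp add: prime_imp_coprime)
  ultimately have "p ^ m dvd k" using coprime_dvd_mult_left_iff by blast
  then show False using assms(2,3) by (simp add: dvd_imp_le leD)
qed

lemma pred_root_of_unity_top_power:
  fixes x :: "'a::comm_ring_1"
  assumes "(x + 1) ^ N = 1" "0 < N"
  shows "x ^ N = - (\<Sum>k=1..<N. of_nat (N choose k) * x ^ k)"
proof -
  have "1 = (\<Sum>k=0..N. of_nat (N choose k) * x ^ k)"
    using assms(1) by (simp add: binomial_ring atLeast0AtMost)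
  also have "\<dots> = 1 + (\<Sum>k=1..<N. of_nat (N choose k) * x ^ k) + x ^ N"
    using assms(2) by (simp add: sum.last_plus sum.atLeast_Suc_lessThan)
  finally show ?thesis by (simp add: algebra_simps eq_neg_iff_add_eq_0)
qed

lemma pred_root_of_unity_power_eq_p_mult:
  fixes x :: "'a::comm_ring_1"
  assumes "prime p" "(x + 1) ^ (p ^ m) = 1"
  shows "\<exists>r \<in> int_span_powers x (p ^ m). x ^ (p ^ m) = of_nat p * r"
proof -
  define N where "N = p ^ m"
  have "0 < N" using assms(1) prime_gt_0_nat unfolding N_def by simp
  have "\<forall>k\<in>{1..<N}. \<exists>q. N choose k = p * q"
    using prime_dvd_prime_power_choose[OF assms(1), of _ m] unfolding N_def by (auto simp: dvd_def)
  then obtain q where q: "\<And>k. k \<in> {1..<N} \<Longrightarrow> N choose k = p * q k" by metis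
  define r where "r = (\<Sum>k=1..<N. of_int (- int (q k)) * x ^ k)"
  have "x ^ N = - (\<Sum>k=1..<N. of_nat (N choose k) * x ^ k)"
    using pred_root_of_unity_top_power assms(2) \<open>0 < N\<close> unfolding N_def by blast
  also have "\<dots> = of_nat p * r"
    unfolding r_def by (simp add: q sum_distrib_left sum_negf[symmetric] mult.assoc)
  finally have "x ^ N = of_nat p * r" .
  moreover have "r \<in> int_span_powers x N"
    unfolding r_def by (intro int_span_powers_sum int_span_powers_of_int_mult power_in_int_span_powers) auto
  ultimately show ?thesis unfolding N_def by blast
qed

lemma pred_root_of_unity_power_expansion:
  fixes x :: "'a::comm_ring_1"
  assumes "prime p" "(x + 1) ^ (p ^ m) = 1"
  obtains e :: "nat \<Rightarrow> nat \<Rightarrow> int"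
  where "\<And>i. x ^ i = (\<Sum>k<p ^ m. of_int (e i k) * x ^ k)"
    and "\<And>i k. int p ^ (i div p ^ m) dvd e i k"
proof -
  define N where "N = p ^ m"
  have "0 < N" using assms(1) prime_gt_0_nat unfolding N_def by simp
  obtain r where r: "r \<in> int_span_powers x N" "x ^ N = of_nat p * r"
    using pred_root_of_unity_power_eq_p_mult[OF assms] unfolding N_def by blast
  have closed: "x ^ N \<in> int_span_powers x N"
    using int_span_powers_of_int_mult[OF r(1), of "int p"] r(2) by simp
  have "\<forall>i. \<exists>b. x ^ i = (\<Sum>k<N. of_int (int p ^ (i div N) * b k) * x ^ k)"
  proof
    fix i
    have "x ^ i = (x ^ N) ^ (i div N) * x ^ (i mod N)"
      by (simp add: power_mult[symmetric] power_add[symmetric])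
    also have "\<dots> = of_nat p ^ (i div N) * (r ^ (i div N) * x ^ (i mod N))"
      by (simp add: r(2) power_mult_distrib)
    finally have x_i: "x ^ i = of_nat p ^ (i div N) * (r ^ (i div N) * x ^ (i mod N))" .
    have "r ^ (i div N) * x ^ (i mod N) \<in> int_span_powers x N"
      using int_span_powers_mult[OF closed int_span_powers_power[OF closed \<open>0 < N\<close> r(1)]
          power_in_int_span_powers]
        \<open>0 < N\<close> by simp
    then obtain b where "r ^ (i div N) * x ^ (i mod N) = (\<Sum>k<N. of_int (b k) * x ^ k)"
      unfolding int_span_powers_def by blast
    then have "x ^ i = of_int (int p ^ (i div N)) * (\<Sum>k<N. of_int (b k) * x ^ k)"
      using x_i by simp
    also have "\<dots> = (\<Sum>k<N. of_int (int p ^ (i div N) * b k) * x ^ k)"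
      unfolding sum_distrib_left by (simp only: of_int_mult mult.assoc)
    finally
    show "\<exists>b. x ^ i = (\<Sum>k<N. of_int (int p ^ (i div N) * b k) * x ^ k)" by blast
  qed
  from choice[OF this] obtain b
    where b: "\<forall>i. x ^ i = (\<Sum>k<N. of_int (int p ^ (i div N) * b i k) * x ^ k)" ..
  show thesis
  proof (rule that)
    show "x ^ i = (\<Sum>k<p ^ m. of_int (int p ^ (i div p ^ m) * b i k) * x ^ k)" for i
      using b unfolding N_def by blast
  qed simp
qed

lemma subfield_sum: "is_subfield K \<Longrightarrow> (\<And>i. i \<in> S \<Longrightarrow> f i \<in> K) \<Longrightarrow> sum f S \<in> K"
  unfolding is_subfield_def by (induction S rule: infinite_finite_induct) auto

lemma subfield_mult: "is_subfield K \<Longrightarrow> x \<in> K \<Longrightarrow> y \<in> K \<Longrightarrow> x * y \<in> K"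
  unfolding is_subfield_def by blast

lemma subfield_diff: "is_subfield K \<Longrightarrow> x \<in> K \<Longrightarrow> y \<in> K \<Longrightarrow> x - y \<in> K"
  unfolding is_subfield_def by (metis diff_conv_add_uminus)

lemma subfield_power: "is_subfield K \<Longrightarrow> x \<in> K \<Longrightarrow> x ^ n \<in> K"
  unfolding is_subfield_def by (induction n) auto

lemma subfield_of_int: "is_subfield K \<Longrightarrow> of_int z \<in> K"
proof -
  assume K: "is_subfield K"
  have "of_nat n \<in> K" for n
    using K unfolding is_subfield_def by (induction n) auto
  moreover have "- of_nat n \<in> K" for n
    using K \<open>of_nat n \<in> K\<close> unfolding is_subfield_def by blast
  ultimately show "of_int z \<in> K"
    by (cases z rule: int_cases) (metis of_int_of_nat_eq, metis of_int_minus of_int_of_nat_eq)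
qed

lemma is_subfield_adjoin: "is_subfield (adjoin F z)"
  unfolding adjoin_def is_subfield_def by blast

lemma subset_adjoin: "F \<subseteq> adjoin F z"
  unfolding adjoin_def by blast

lemma generator_in_adjoin: "z \<in> adjoin F z"
  unfolding adjoin_def by blast

section \<open>Decay of the weights against powers of 1/p\<close>

lemma wt_pos: "0 < wt i u"
  unfolding wt_def by simp

lemma wt_mult_power_div_tendsto_0:
  fixes p N :: nat
  assumes "1 < p" "0 < N"
  shows "(\<lambda>i. wt i u * (1 / real p) ^ (i div N)) \<longlonglongrightarrow> 0"
proof (rule Lim_null_comparison)
  define b where "b = ln (real p) / real N"
  have "0 < b" using assms unfolding b_def by simp
  then have "(\<lambda>i. real i powr u * exp (- b * real i)) \<longlonglongrightarrow> 0" by real_asymp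
  then show "(\<lambda>i. real p * (real i powr u * exp (- b * real i))) \<longlonglongrightarrow> 0"
    by (rule tendsto_mult_right_zero)
  have bound: "(1 / real p) ^ (i div N) \<le> real p * exp (- b * real i)" for i
  proof -
    have "i < N + i div N * N"
      using assms(2) by (rule dividend_less_div_times)
    then have "real i < real N * (real (i div N) + 1)"
      by (simp add: algebra_simps flip: of_nat_mult of_nat_add)
    then have "real i / real N - 1 \<le> real (i div N)"
      using assms(2) by (simp add: field_simps)
    then have "exp (- real (i div N) * ln (real p)) \<le> exp ((1 - real i / real N) * ln (real p))"
      using assms(1) by (intro exp_mono mult_right_mono) auto
    moreover have "exp (- real (i div N) * ln (real p)) = (1 / real p) ^ (i div N)"
      using assms(1) by (simp add: exp_minus exp_of_nat_mult power_one_over inverse_eq_divide)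
    moreover have "exp ((1 - real i / real N) * ln (real p)) = real p * exp (- b * real i)"
    proof -
      have "(1 - real i / real N) * ln (real p) = ln (real p) + - b * real i"
        by (simp add: b_def algebra_simps)
      then show ?thesis using assms(1) by (simp add: exp_diff exp_minus divide_inverse)
    qed
    ultimately show ?thesis by simp
  qed
  show "\<forall>\<^sub>F i in sequentially. norm (wt i u * (1 / real p) ^ (i div N))
      \<le> real p * (real i powr u * exp (- b * real i))"
  proof (rule eventually_sequentiallyI)
    fix i :: nat assume "1 \<le> i"
    then show "norm (wt i u * (1 / real p) ^ (i div N)) \<le> real p * (real i powr u * exp (- b * real i))"
      using mult_left_mono[OF bound, of "real i powr u" i] by (simp add: wt_def mult.left_commute)
  qed
qed

section \<open>Series for a nonarchimedean absolute value\<close>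

context
  fixes a :: "'k::field \<Rightarrow> real"
  assumes nonarch: "nonarch_abs a"
begin

lemma nonarch_abs_nonneg: "0 \<le> a x"
  and nonarch_abs_eq_0_iff: "a x = 0 \<longleftrightarrow> x = 0"
  and nonarch_abs_mult: "a (x * y) = a x * a y"
  and nonarch_abs_add_le_max: "a (x + y) \<le> max (a x) (a y)"
  using nonarch unfolding nonarch_abs_def by auto

lemma nonarch_abs_0: "a 0 = 0"
  using nonarch_abs_eq_0_iff by simp

lemma nonarch_abs_one: "a 1 = 1"
  using nonarch_abs_mult[of 1 1] nonarch_abs_eq_0_iff[of 1] by simp

lemma nonarch_abs_minus: "a (- x) = a x"
proof -
  have "a (- 1) * a (- 1) = 1"
    using nonarch_abs_mult[of "- 1" "- 1"] nonarch_abs_one by simp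
  then have "a (- 1) = 1"
    using nonarch_abs_nonneg[of "- 1"] by (simp add: square_eq_1_iff)
  then show ?thesis
    using nonarch_abs_mult[of "- 1" x] by simp
qed

lemma nonarch_abs_triangle: "a (x + y) \<le> a x + a y"
  using nonarch_abs_add_le_max[of x y] nonarch_abs_nonneg[of x] nonarch_abs_nonneg[of y] by linarith

lemma nonarch_abs_minus_commute: "a (x - y) = a (y - x)"
  using nonarch_abs_minus[of "x - y"] by simp

lemma nonarch_abs_power: "a (x ^ n) = a x ^ n"
  by (induction n) (simp_all add: nonarch_abs_one nonarch_abs_mult)

lemma nonarch_abs_sum_le_bound:
  assumes "\<And>i. i \<in> S \<Longrightarrow> a (f i) \<le> B" "0 \<le> B"
  shows "a (sum f S) \<le> B"
  using assms
proof (induction S rule: infinite_finite_induct)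
  case (insert x S)
  then have "a (f x) \<le> B" "a (sum f S) \<le> B" by simp_all
  then show ?case
    using nonarch_abs_add_le_max[of "f x" "sum f S"] insert(1,2) by simp
qed (simp_all add: nonarch_abs_0)

lemma nonarch_abs_sum_le: "a (sum f S) \<le> (\<Sum>i\<in>S. a (f i))"
proof (induction S rule: infinite_finite_induct)
  case (insert x S)
  then show ?case using nonarch_abs_triangle[of "f x" "sum f S"] by simp
qed (simp_all add: nonarch_abs_0)

lemma nonarch_abs_of_int_le_1: "a (of_int z) \<le> 1"
proof -
  have "a (of_nat n) \<le> 1" for n
  proof (induction n)
    case (Suc n)
    then show ?case
      using nonarch_abs_add_le_max[of 1 "of_nat n"] by (simp add: nonarch_abs_one)
  qed (simp add: nonarch_abs_0)
  moreover have "of_int z = - (of_nat (nat (- z)) :: 'k) \<or> of_int z = (of_nat (nat z) :: 'k)"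
    by (cases "z < 0") simp_all
  ultimately show ?thesis
    by (metis nonarch_abs_minus)
qed

lemma nonarch_abs_of_int_le_if_prime_power_dvd:
  assumes "a (of_nat p) = 1 / real p" "int p ^ q dvd z"
  shows "a (of_int z) \<le> (1 / real p) ^ q"
proof -
  obtain y where "z = int p ^ q * y" using assms(2) by (elim dvdE)
  then have "a (of_int z) = (1 / real p) ^ q * a (of_int y)"
    using assms(1) by (simp add: nonarch_abs_mult nonarch_abs_power)
  also have "\<dots> \<le> (1 / real p) ^ q"
    using nonarch_abs_of_int_le_1[of y] by (simp add: mult_left_le)
  finally show ?thesis .
qed

lemma abs_tendsto_unique: "abs_tendsto a f L \<Longrightarrow> abs_tendsto a f L' \<Longrightarrow> L = L'"
proof -
  assume lim: "abs_tendsto a f L" "abs_tendsto a f L'"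
  have "a (L - L') \<le> a (f n - L) + a (f n - L')" for n
    using nonarch_abs_triangle[of "L - f n" "f n - L'"] nonarch_abs_minus_commute[of L "f n"] by simp
  moreover have "(\<lambda>n. a (f n - L) + a (f n - L')) \<longlonglongrightarrow> 0"
    using tendsto_add[OF lim[unfolded abs_tendsto_def]] by simp
  ultimately have "a (L - L') \<le> 0"
    by (intro LIMSEQ_le_const) auto
  then show "L = L'"
    using nonarch_abs_nonneg[of "L - L'"] nonarch_abs_eq_0_iff[of "L - L'"] by simp
qed

lemma abs_suminf_eqI: "abs_tendsto a (\<lambda>n. \<Sum>i<n. f i) L \<Longrightarrow> abs_suminf a f = L"
  unfolding abs_suminf_def using abs_tendsto_unique by blast

lemma abs_tendsto_le_bound:
  assumes "abs_tendsto a s L" "\<And>n. a (s n) \<le> B"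
  shows "a L \<le> B"
proof -
  have "a L \<le> a (s n - L) + B" for n
    using nonarch_abs_triangle[of "L - s n" "s n"] nonarch_abs_minus_commute[of L "s n"] assms(2)[of n]
    by simp
  moreover have "(\<lambda>n. a (s n - L) + B) \<longlonglongrightarrow> B"
    using tendsto_add[OF assms(1)[unfolded abs_tendsto_def] tendsto_const[of B]] by simp
  ultimately show ?thesis
    by (intro LIMSEQ_le_const) auto
qed

lemma abs_tendsto_lincomb:
  assumes "\<And>k. k \<in> K \<Longrightarrow> abs_tendsto a (f k) (l k)"
  shows "abs_tendsto a (\<lambda>n. \<Sum>k\<in>K. f k n * z k) (\<Sum>k\<in>K. l k * z k)"
  unfolding abs_tendsto_def
proof (rule Lim_null_comparison)
  show "(\<lambda>n. \<Sum>k\<in>K. a (f k n - l k) * a (z k)) \<longlonglongrightarrow> 0"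
    using tendsto_sum[of K "\<lambda>k n. a (f k n - l k) * a (z k)" "\<lambda>_. 0"] assms
    unfolding abs_tendsto_def by (simp add: tendsto_mult_left_zero)
  have "a ((\<Sum>k\<in>K. f k n * z k) - (\<Sum>k\<in>K. l k * z k))
      \<le> (\<Sum>k\<in>K. a (f k n - l k) * a (z k))" for n
    using nonarch_abs_sum_le[of "\<lambda>k. (f k n - l k) * z k" K]
    by (simp add: sum_subtractf[symmetric] left_diff_distrib[symmetric] nonarch_abs_mult)
  then show "\<forall>\<^sub>F n in sequentially.
      norm (a ((\<Sum>k\<in>K. f k n * z k) - (\<Sum>k\<in>K. l k * z k)))
        \<le> (\<Sum>k\<in>K. a (f k n - l k) * a (z k))"
    by (simp add: nonarch_abs_nonneg)
qed

lemma abs_cauchy_partial_sums: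
  assumes "(\<lambda>i. a (t i)) \<longlonglongrightarrow> 0"
  shows "abs_cauchy a (\<lambda>n. \<Sum>i<n. t i)"
  unfolding abs_cauchy_def
proof (intro allI impI)
  fix e :: real assume "0 < e"
  then obtain N where "\<forall>i\<ge>N. norm (a (t i) - 0) < e / 2"
    using LIMSEQ_D[OF assms, of "e / 2"] by auto
  then have N: "\<And>i. N \<le> i \<Longrightarrow> a (t i) < e / 2"
    using nonarch_abs_nonneg by simp
  have tail: "a ((\<Sum>i<m. t i) - (\<Sum>i<n. t i)) < e" if "N \<le> n" "n \<le> m" for m n
  proof -
    have "(\<Sum>i<n. t i) + (\<Sum>i\<in>{n..<m}. t i) = (\<Sum>i<m. t i)"
      using sum.atLeastLessThan_concat[of 0 n m t] that(2) by (simp add: atLeast0LessThan)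
    then have "(\<Sum>i<m. t i) - (\<Sum>i<n. t i) = (\<Sum>i\<in>{n..<m}. t i)"
      by (metis add_diff_cancel_left')
    also have "a \<dots> \<le> e / 2"
    proof (rule nonarch_abs_sum_le_bound)
      show "a (t i) \<le> e / 2" if "i \<in> {n..<m}" for i
        using N[of i] that \<open>N \<le> n\<close> by simp
    qed (use \<open>0 < e\<close> in simp)
    finally show ?thesis using \<open>0 < e\<close> by simp
  qed
  show "\<exists>N. \<forall>m\<ge>N. \<forall>n\<ge>N. a ((\<Sum>i<m. t i) - (\<Sum>i<n. t i)) < e"
  proof (intro exI allI impI)
    fix m n assume "N \<le> m" "N \<le> n"
    then show "a ((\<Sum>i<m. t i) - (\<Sum>i<n. t i)) < e"
    proof (cases "n \<le> m")
      case True
      then show ?thesis using tail \<open>N \<le> n\<close> by blast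
    next
      case False
      then have "a ((\<Sum>i<n. t i) - (\<Sum>i<m. t i)) < e" using tail \<open>N \<le> m\<close> by simp
      then show ?thesis using nonarch_abs_minus_commute by metis
    qed
  qed
qed

lemma abs_series_converges:
  assumes "is_subfield S" "abs_complete a S" "\<And>i. t i \<in> S" "(\<lambda>i. a (t i)) \<longlonglongrightarrow> 0"
  shows "\<exists>L\<in>S. abs_tendsto a (\<lambda>n. \<Sum>i<n. t i) L"
proof -
  have "\<forall>n. (\<Sum>i<n. t i) \<in> S"
    by (intro allI subfield_sum[OF assms(1)] assms(3))
  then show ?thesis
    using assms(2) abs_cauchy_partial_sums[OF assms(4)] unfolding abs_complete_def by simp
qed

lemma abs_tendsto_regrouped_series:
  assumes "\<And>i. c i * x ^ i = (\<Sum>k<N. t k i * x ^ k)"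
    and "\<And>k. k < N \<Longrightarrow> abs_tendsto a (\<lambda>n. \<Sum>i<n. t k i) (l k)"
  shows "abs_tendsto a (\<lambda>n. \<Sum>i<n. c i * x ^ i) (\<Sum>k<N. l k * x ^ k)"
proof -
  have "(\<Sum>i<n. c i * x ^ i) = (\<Sum>k<N. (\<Sum>i<n. t k i) * x ^ k)" for n
    by (simp add: assms(1) sum_distrib_right sum.swap[of _ "{..<n}"])
  then show ?thesis
    using abs_tendsto_lincomb[of "{..<N}" "\<lambda>k n. \<Sum>i<n. t k i" l "\<lambda>k. x ^ k"] assms(2)
    by simp
qed

lemma abs_series_converges_bounded:
  assumes "is_subfield S" "abs_complete a S" "\<And>i. t i \<in> S"
    and "\<And>i. a (t i) \<le> g i" "g \<longlonglongrightarrow> 0" "\<And>i. g i \<le> M"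
  shows "\<exists>L\<in>S. abs_tendsto a (\<lambda>n. \<Sum>i<n. t i) L \<and> a L \<le> M"
proof -
  have "(\<lambda>i. a (t i)) \<longlonglongrightarrow> 0"
    by (rule Lim_null_comparison[OF _ assms(5)]) (simp add: nonarch_abs_nonneg assms(4))
  then obtain L where L: "L \<in> S" "abs_tendsto a (\<lambda>n. \<Sum>i<n. t i) L"
    using abs_series_converges[of S t] assms(1-3) by blast
  have "0 \<le> M"
    using nonarch_abs_nonneg[of "t 0"] assms(4,6)[of 0] by linarith
  have "a (\<Sum>i<n. t i) \<le> M" for n
    using assms(4,6) order_trans \<open>0 \<le> M\<close> by (intro nonarch_abs_sum_le_bound) blast+
  then show ?thesis
    using L abs_tendsto_le_bound[OF L(2)] by blast
qed

lemma nonarch_abs_sum_powers_le: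
  assumes "\<And>k. a (l k) \<le> C"
  shows "a (\<Sum>k<N. l k * x ^ k) \<le> C * (\<Sum>k<N. a x ^ k)"
proof -
  have "a (\<Sum>k<N. l k * x ^ k) \<le> (\<Sum>k<N. a (l k) * a x ^ k)"
    using nonarch_abs_sum_le[of "\<lambda>k. l k * x ^ k" "{..<N}"]
    by (simp add: nonarch_abs_mult nonarch_abs_power)
  also have "\<dots> \<le> (\<Sum>k<N. C * a x ^ k)"
    using assms nonarch_abs_nonneg by (intro sum_mono mult_right_mono) auto
  finally show ?thesis by (simp add: sum_distrib_left)
qed

section \<open>Specialisation at a p-power root of unity\<close>

lemma series_at_pred_root_of_unity_in_adjoin:
  assumes F: "is_subfield F" "abs_complete a F"
    and p: "prime p" "a (of_nat p) = 1 / real p"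
    and \<zeta>: "\<zeta> ^ (p ^ m) = 1"
    and c: "\<And>i. c i \<in> F" "\<And>i. a (c i) \<le> B * wt i u"
    and M: "\<And>i. wt i u * (1 / real p) ^ (i div p ^ m) \<le> M"
  shows "\<exists>L \<in> adjoin F \<zeta>. abs_tendsto a (\<lambda>n. \<Sum>i<n. c i * (\<zeta> - 1) ^ i) L
           \<and> a L \<le> B * M * (\<Sum>k<p ^ m. a (\<zeta> - 1) ^ k)"
proof -
  define N where "N = p ^ m"
  define \<pi> where "\<pi> = \<zeta> - 1"
  obtain e where e: "\<And>i. \<pi> ^ i = (\<Sum>k<N. of_int (e i k) * \<pi> ^ k)"
    and e_dvd: "\<And>i k. int p ^ (i div N) dvd e i k"
    using pred_root_of_unity_power_expansion[OF p(1), of \<pi> m] \<zeta> unfolding \<pi>_def N_def by auto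
  define t where "t k i = c i * of_int (e i k)" for k i
  have "0 \<le> B"
    using c(2)[of 0] nonarch_abs_nonneg[of "c 0"] by (simp add: wt_def)
  have t_le: "a (t k i) \<le> B * (wt i u * (1 / real p) ^ (i div N))" for k i
    unfolding t_def nonarch_abs_mult mult.assoc[symmetric]
    using c(2) nonarch_abs_of_int_le_if_prime_power_dvd[OF p(2) e_dvd]
    by (intro mult_mono) (simp_all add: nonarch_abs_nonneg \<open>0 \<le> B\<close> less_imp_le[OF wt_pos])
  have t_F: "t k i \<in> F" for k i
    unfolding t_def using F(1) c(1) by (intro subfield_mult subfield_of_int)
  have "1 < p" using p(1) prime_gt_1_nat by blast
  then have g_null: "(\<lambda>i. B * (wt i u * (1 / real p) ^ (i div N))) \<longlonglongrightarrow> 0"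
    unfolding N_def by (intro tendsto_mult_right_zero wt_mult_power_div_tendsto_0) auto
  have g_le: "B * (wt i u * (1 / real p) ^ (i div N)) \<le> B * M" for i
    using M \<open>0 \<le> B\<close> unfolding N_def by (rule mult_left_mono)
  have "\<forall>k. \<exists>l \<in> F. abs_tendsto a (\<lambda>n. \<Sum>i<n. t k i) l \<and> a l \<le> B * M"
    by (intro allI abs_series_converges_bounded[OF F t_F t_le g_null g_le])
  then obtain l where l: "\<And>k. l k \<in> F" "\<And>k. abs_tendsto a (\<lambda>n. \<Sum>i<n. t k i) (l k)"
    "\<And>k. a (l k) \<le> B * M"
    by metis
  define L where "L = (\<Sum>k<N. l k * \<pi> ^ k)"
  have "c i * \<pi> ^ i = (\<Sum>k<N. t k i * \<pi> ^ k)" for i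
    using e[of i] by (simp add: t_def sum_distrib_left mult.assoc)
  then have "abs_tendsto a (\<lambda>n. \<Sum>i<n. c i * \<pi> ^ i) L"
    unfolding L_def using l(2) by (rule abs_tendsto_regrouped_series)
  moreover have "\<pi> \<in> adjoin F \<zeta>"
    unfolding \<pi>_def using is_subfield_adjoin generator_in_adjoin
    by (intro subfield_diff) (auto simp: is_subfield_def)
  then have "L \<in> adjoin F \<zeta>"
    unfolding L_def using is_subfield_adjoin l(1) subset_adjoin[of F \<zeta>]
    by (intro subfield_sum subfield_mult subfield_power) auto
  moreover have "a L \<le> B * M * (\<Sum>k<N. a \<pi> ^ k)"
    unfolding L_def using l(3) by (rule nonarch_abs_sum_powers_le)
  ultimately show ?thesis
    unfolding \<pi>_def N_def by blast
qed

lemma specialised_coefficients_converge: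
  assumes F: "is_subfield F" "abs_complete a F"
    and p: "prime p" "a (of_nat p) = 1 / real p"
    and \<zeta>: "\<zeta> ^ (p ^ m) = 1"
    and c: "D2 a F \<Delta> u v c" "\<sigma> \<in> \<Delta>"
  shows "\<exists>C. \<forall>j. \<exists>L \<in> adjoin F \<zeta>.
           abs_tendsto a (\<lambda>n. \<Sum>i<n. c \<sigma> i j * (\<zeta> - 1) ^ i) L \<and> a L \<le> C * wt j v"
proof -
  have "(\<lambda>i. wt i u * (1 / real p) ^ (i div p ^ m)) \<longlonglongrightarrow> 0"
    using p(1) prime_gt_0_nat prime_gt_1_nat by (intro wt_mult_power_div_tendsto_0) auto
  then have "Bseq (\<lambda>i. wt i u * (1 / real p) ^ (i div p ^ m))"
    by (rule convergent_imp_Bseq[OF convergentI])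
  then obtain M where "\<And>i. norm (wt i u * (1 / real p) ^ (i div p ^ m)) \<le> M"
    unfolding Bseq_def by blast
  then have M: "\<And>i. wt i u * (1 / real p) ^ (i div p ^ m) \<le> M"
    by (metis abs_le_D1 real_norm_def)
  obtain B where B: "\<And>i j. a (c \<sigma> i j) \<le> B * (wt i u * wt j v)"
    using c unfolding D2_def by blast
  have "\<exists>L \<in> adjoin F \<zeta>. abs_tendsto a (\<lambda>n. \<Sum>i<n. c \<sigma> i j * (\<zeta> - 1) ^ i) L
      \<and> a L \<le> (B * M * (\<Sum>k<p ^ m. a (\<zeta> - 1) ^ k)) * wt j v" for j
  proof -
    have "\<And>i. c \<sigma> i j \<in> F" "\<And>i. a (c \<sigma> i j) \<le> (B * wt j v) * wt i u"
      using c B unfolding D2_def by (auto simp: ac_simps)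
    from series_at_pred_root_of_unity_in_adjoin[OF F p \<zeta> this M]
    show ?thesis by (simp add: ac_simps)
  qed
  then show ?thesis by blast
qed

end

theorem lemma2p1:
  fixes a :: "'k::field_char_0 \<Rightarrow> real"
    and p :: nat and F :: "'k set" and \<Delta> :: "'d set"
    and u v :: real and c :: "'d \<Rightarrow> nat \<Rightarrow> nat \<Rightarrow> 'k"
    and \<zeta> :: 'k and w :: "'d \<Rightarrow> 'k"
  assumes "prime p" and "odd p"
    and "nonarch_abs a" and "abs_complete a UNIV"
    and "a (of_nat p) = 1 / real p"
    and "is_subfield F" and "abs_complete a F"
    and "finite \<Delta>"
    and "\<forall>\<sigma>\<in>\<Delta>. w \<sigma> \<in> F \<and> w \<sigma> ^ card \<Delta> = 1"
    and "\<exists>m. \<zeta> ^ (p ^ m) = 1"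
    and "0 \<le> u" and "0 \<le> v"
    and "D2 a F \<Delta> u v c"
  shows "(\<forall>\<sigma>\<in>\<Delta>. \<forall>j. \<exists>L. abs_tendsto a (\<lambda>n. \<Sum>i<n. c \<sigma> i j * (\<zeta> - 1) ^ i) L)
         \<and> D1 a (adjoin F \<zeta>) \<Delta> v (specialise a c \<zeta> w)"
proof -
  obtain m where "\<zeta> ^ (p ^ m) = 1" using assms(10) by blast
  note coeffs = specialised_coefficients_converge[OF assms(3,6,7,1,5) this assms(13)]
  have spec: "specialise a c \<zeta> w \<sigma> j = w \<sigma> * L"
    if "abs_tendsto a (\<lambda>n. \<Sum>i<n. c \<sigma> i j * (\<zeta> - 1) ^ i) L" for \<sigma> j L
    unfolding specialise_def using abs_suminf_eqI[OF assms(3) that] by simp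
  have w: "w \<sigma> \<in> adjoin F \<zeta>" if "\<sigma> \<in> \<Delta>" for \<sigma>
    using assms(9) that subset_adjoin by blast
  have L: "\<exists>L \<in> adjoin F \<zeta>. abs_tendsto a (\<lambda>n. \<Sum>i<n. c \<sigma> i j * (\<zeta> - 1) ^ i) L"
    if "\<sigma> \<in> \<Delta>" for \<sigma> j
    using coeffs[OF that] by blast
  show ?thesis
    unfolding D1_def
  proof (intro conjI ballI allI)
    show "\<exists>L. abs_tendsto a (\<lambda>n. \<Sum>i<n. c \<sigma> i j * (\<zeta> - 1) ^ i) L"
      if "\<sigma> \<in> \<Delta>" for \<sigma> j
      using L[OF that] by blast
    show "specialise a c \<zeta> w \<sigma> j \<in> adjoin F \<zeta>" if "\<sigma> \<in> \<Delta>" for \<sigma> j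
      using L[OF that] spec subfield_mult[OF is_subfield_adjoin w[OF that]] by metis
  next
    fix \<sigma> assume "\<sigma> \<in> \<Delta>"
    then obtain C where C: "\<forall>j. \<exists>L. abs_tendsto a (\<lambda>n. \<Sum>i<n. c \<sigma> i j * (\<zeta> - 1) ^ i) L
        \<and> a L \<le> C * wt j v" using coeffs by blast
    have "a (specialise a c \<zeta> w \<sigma> j) \<le> (a (w \<sigma>) * C) * wt j v" for j
      using C spec nonarch_abs_mult[OF assms(3)] nonarch_abs_nonneg[OF assms(3)]
      by (metis mult.assoc mult_left_mono)
    then show "\<exists>C. \<forall>j. a (specialise a c \<zeta> w \<sigma> j) \<le> C * wt j v" by blast
  qed
qed

end
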